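(* Let $R$ be a uniform $L$-layered $1$-semifield$^\dagger$ with $L=\mathbb{Q}_{>0}$, and let $f=(\lambda+a_m)\cdots(\lambda+a_1)\in R[\lambda]$ be separable, with $a_m>_\nu a_{m-1}>_\nu\cdots>_\nu a_1$. Then its layered derivative is $$f'=\prod_{k=2}^m\big(\lambda^{[k/(k-1)]}+a_k\big)=\big(\lambda^{[m/(m-1)]}+a_m\big)\big(\lambda^{[(m-1)/(m-2)]}+a_{m-1}\big)\cdots\big(\lambda^{[2]}+a_2\big).$$
   Context: Concretely, $R=R(\mathbb{Q}_{>0},\mathcal{G})$ with $\mathcal{G}$ a totally ordered abelian group; elements $x^{[\ell]}$ ($x\in\mathcal{G}$, layer $\ell\in\mathbb{Q}_{>0}$), $x^{[k]}y^{[\ell]}=(xy)^{[k\ell]}$, $x^{[k]}+y^{[\ell]}$ equal to $x^{[k]}$ if $x>y$, $y^{[\ell]}$ if $x<y$, $x^{[k+\ell]}$ if $x=y$; a zero element $\mathbb{0}_R$ is formally adjoined. $u<_\nu v$ means the $\mathcal{G}$-value of $u$ is smaller. $\lambda^{[q]}$ denotes $\mathbb{1}^{[q]}\lambda$. A polynomial is separable if it is a constant times a product of linear factors having pairwise $\nu$-inequivalent corner roots. The layered derivative of $\sum_{j=0}^n\alpha_j^{[\ell_j]}\lambda^j$ is $\sum_{j=1}^n\alpha_j^{[j\ell_j]}\lambda^{j-1}$. *)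

theory Defs
  imports Main "HOL.Rat"
begin

text \<open>The totally ordered abelian group G is
  written additively (class linordered_ab_group_add): the group product xy of the paper is
  x + y here and the group unit is 0. An element x^[l] is LEl x l (the layer l is a
  rational, required to be positive where it matters); LZero is the adjoined zero.\<close>

datatype 'g lay = LZero | LEl 'g rat

fun lay_ok :: "'g lay \<Rightarrow> bool" where
  "lay_ok LZero = True"
| "lay_ok (LEl x l) = (0 < l)"

fun ladd :: "'g::linorder lay \<Rightarrow> 'g lay \<Rightarrow> 'g lay" where
  "ladd LZero b = b"
| "ladd a LZero = a"
| "ladd (LEl x k) (LEl y l) =
     (if y < x then LEl x k else if x < y then LEl y l else LEl x (k + l))"

fun lmul :: "'g::ab_semigroup_add lay \<Rightarrow> 'g lay \<Rightarrow> 'g lay" where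
  "lmul LZero b = LZero"
| "lmul a LZero = LZero"
| "lmul (LEl x k) (LEl y l) = LEl (x + y) (k * l)"

fun nu_less :: "'g::linorder lay \<Rightarrow> 'g lay \<Rightarrow> bool" where
  "nu_less _ LZero = False"
| "nu_less LZero (LEl _ _) = True"
| "nu_less (LEl x _) (LEl y _) = (x < y)"

definition lone :: "rat \<Rightarrow> 'g::zero lay" where
  "lone q = LEl 0 q"

text \<open>Polynomials in R[lambda] as coefficient functions: p i is the coefficient of lambda^i.\<close>
type_synonym 'g lpoly = "nat \<Rightarrow> 'g lay"

definition lsum_upto :: "nat \<Rightarrow> (nat \<Rightarrow> 'g::linorder lay) \<Rightarrow> 'g lay" where
  "lsum_upto n f = foldr (\<lambda>i acc. ladd (f i) acc) [0..<Suc n] LZero"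

definition pmul :: "'g::linordered_ab_group_add lpoly \<Rightarrow> 'g lpoly \<Rightarrow> 'g lpoly" where
  "pmul p q = (\<lambda>n. lsum_upto n (\<lambda>i. lmul (p i) (q (n - i))))"

definition pone :: "'g::linordered_ab_group_add lpoly" where
  "pone = (\<lambda>n. if n = 0 then lone 1 else LZero)"

text \<open>The linear polynomial lambda^[q] + a  (lambda^[q] = 1^[q] lambda).\<close>
definition plin :: "rat \<Rightarrow> 'g::linordered_ab_group_add lay \<Rightarrow> 'g lpoly" where
  "plin q a = (\<lambda>n. if n = 0 then a else if n = 1 then lone q else LZero)"

definition pprod :: "'g::linordered_ab_group_add lpoly list \<Rightarrow> 'g lpoly" where
  "pprod ps = foldr pmul ps pone"

fun lay_scale :: "nat \<Rightarrow> 'g lay \<Rightarrow> 'g lay" where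
  "lay_scale j LZero = LZero"
| "lay_scale j (LEl x l) = LEl x (of_nat j * l)"

definition lderiv :: "'g lpoly \<Rightarrow> 'g lpoly" where
  "lderiv p = (\<lambda>n. lay_scale (Suc n) (p (Suc n)))"

end

theory Submission
  imports Defs
begin

text \<open>Multiply the factors \<open>\<lambda>^[q] + a\<^sub>k\<close> in order of \<open>\<nu>\<close>-decreasing \<open>a\<^sub>k\<close>.
  Every coefficient of a partial product \<open>R\<close> is then a single monomial, and this persists:
  the coefficient of \<open>\<lambda>^n\<close> in \<open>(\<lambda>^[q] + c) R\<close> is \<open>c r\<^sub>n + 1^[q] r\<^sub>n\<^sub>-\<^sub>1\<close>, where
  \<open>r\<^sub>n\<^sub>-\<^sub>1\<close> carries one more constant than \<open>r\<^sub>n\<close>, \<open>\<nu>\<close>-smaller than \<open>c\<close>, so the first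
  summand dominates. Thus the coefficient of \<open>\<lambda>^n\<close> is the product of the largest
  constants, with the product of the layers of the remaining factors as its layer. In \<open>f\<close>
  the coefficient of \<open>\<lambda>^(n+1)\<close> is \<open>a\<^sub>m\<cdots>a\<^sub>n\<^sub>+\<^sub>2\<close> of layer 1, so in \<open>f'\<close> that of \<open>\<lambda>^n\<close> has
  layer \<open>n+1\<close>; the claimed product has the same constants there, with layer
  \<open>\<Prod>k=2..n+1. k/(k-1) = n+1\<close>.\<close>

lemma lmul_assoc: "lmul (lmul x y) z = lmul x (lmul y (z::'g::ab_semigroup_add lay))"
  by (cases x; cases y; cases z) (simp_all add: add.assoc mult.assoc)

lemma lmul_LZero_right [simp]: "lmul x LZero = LZero"
  by (cases x) simp_all

lemma lmul_lone_1_left [simp]: "lmul (lone 1) x = (x::'g::linordered_ab_group_add lay)"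
  by (cases x) (simp_all add: lone_def)

lemma lmul_lone_1_right [simp]: "lmul x (lone 1) = (x::'g::linordered_ab_group_add lay)"
  by (cases x) (simp_all add: lone_def)

lemma lmul_lone_lone [simp]: "lmul (lone p) (lone q) = (lone (p * q) :: 'g::linordered_ab_group_add lay)"
  by (simp add: lone_def)

lemma ladd_LZero_right [simp]: "ladd x LZero = x"
  by (cases x) simp_all

lemma lay_scale_eq_lmul_lone:
  "lay_scale j x = lmul x (lone (of_nat j) :: 'g::linordered_ab_group_add lay)"
  by (cases x) (simp_all add: lone_def mult.commute)

lemma nu_less_trans: "nu_less x y \<Longrightarrow> nu_less y z \<Longrightarrow> nu_less x (z::'g::linorder lay)"
  by (cases x; cases y; cases z) auto

lemma ladd_lmul_dominant:
  fixes c d :: "'g::linordered_ab_group_add lay"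
  assumes "nu_less d c"
  shows "ladd (lmul c (lmul C (lone p))) (lmul (lone q) (lmul C (lmul d (lone r))))
       = lmul c (lmul C (lone p))"
  using assms by (cases c; cases C; cases d) (auto simp: lone_def add.commute add.left_commute)

definition lprod :: "'g::linordered_ab_group_add lay list \<Rightarrow> 'g lay" where
  "lprod cs = foldr lmul cs (lone 1)"

lemma lprod_Nil [simp]: "lprod [] = lone 1"
  by (simp add: lprod_def)

lemma lprod_Cons [simp]: "lprod (c # cs) = lmul c (lprod cs)"
  by (simp add: lprod_def)

lemma lprod_append: "lprod (xs @ ys) = lmul (lprod xs) (lprod ys)"
  by (induction xs) (simp_all add: lmul_assoc)

lemma pmul_plin_0 [simp]: "pmul (plin q c) p 0 = lmul c (p 0)"
  by (simp add: pmul_def lsum_upto_def plin_def)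

lemma pmul_plin_Suc [simp]:
  "pmul (plin q c) p (Suc n) = ladd (lmul c (p (Suc n))) (lmul (lone q) (p n))"
proof -
  have split: "[0..<Suc (Suc n)] = 0 # 1 # [2..<Suc (Suc n)]"
    by (simp add: upt_conv_Cons numeral_2_eq_2)
  have vanish: "foldr (\<lambda>i acc. ladd (lmul (plin q c i) (p (Suc n - i))) acc) xs LZero = LZero"
    if "\<forall>i\<in>set xs. 2 \<le> i" for xs
    using that by (induction xs) (auto simp: plin_def)
  have high: "foldr (\<lambda>i acc. ladd (lmul (plin q c i) (p (Suc n - i))) acc)
      [2..<Suc (Suc n)] LZero = LZero"
    by (rule vanish) (simp del: upt_Suc)
  show ?thesis
    by (simp only: pmul_def lsum_upto_def split foldr_Cons o_def high) (simp add: plin_def)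
qed

lemma pprod_Cons [simp]: "pprod (p # ps) = pmul p (pprod ps)"
  by (simp add: pprod_def)

lemma pprod_plin_coeff:
  fixes a :: "nat \<Rightarrow> 'g::linordered_ab_group_add lay"
  assumes "sorted_wrt (\<lambda>i j. nu_less (a j) (a i)) ks"
  shows "pprod (map (\<lambda>k. plin (Q k) (a k)) ks) n =
    (if n \<le> length ks
     then lmul (lprod (map a (take (length ks - n) ks)))
            (lone (prod_list (map Q (drop (length ks - n) ks))))
     else LZero)"
  using assms
proof (induction ks arbitrary: n)
  case Nil
  then show ?case by (simp add: pprod_def pone_def lone_def)
next
  case (Cons k ks)
  let ?R = "pprod (map (\<lambda>k. plin (Q k) (a k)) ks)"
  let ?r = "length ks"
  have IH: "?R j = (if j \<le> ?r then lmul (lprod (map a (take (?r - j) ks)))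
        (lone (prod_list (map Q (drop (?r - j) ks)))) else LZero)" for j
    using Cons by simp
  consider "n = 0" | j where "n = Suc j" "?r \<le> j" | j where "n = Suc j" "j < ?r"
    by (cases n) (blast, metis not_le)
  then show ?case
  proof cases
    case 1
    then show ?thesis by (simp add: IH lmul_assoc)
  next
    case 2
    then show ?thesis by (auto simp: IH)
  next
    case (3 j)
    define i where "i = ?r - Suc j"
    have i: "i < ?r" "?r - j = Suc i" "Suc ?r - n = Suc i"
      using 3 by (auto simp: i_def)
    have take_Suc_i: "take (Suc i) ks = take i ks @ [ks ! i]"
      using i(1) by (simp add: take_Suc_conv_app_nth)
    have "nu_less (a (ks ! i)) (a k)"
      using Cons.prems i(1) by simp
    then show ?thesis
      using 3 i
      by (simp add: IH i_def[symmetric] take_Suc_i lprod_append lmul_assoc ladd_lmul_dominant)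
  qed
qed

lemma nu_less_chain:
  assumes "\<forall>k\<in>{1..<m}. nu_less (a k) (a (Suc k))" "1 \<le> i" "i < j" "j \<le> m"
  shows "nu_less (a i) (a j)"
  using assms(3,4)
proof (induction j)
  case (Suc j)
  show ?case
  proof (cases "i = j")
    case True
    then show ?thesis using assms(1,2) Suc.prems by auto
  next
    case False
    then show ?thesis
      using Suc assms(1,2) by (auto intro: nu_less_trans)
  qed
qed simp

lemma take_rev_upt:
  assumes "l + k \<le> n"
  shows "take k (rev [l..<n]) = rev [n - k..<n]"
proof -
  have "l + (n - (l + k)) = n - k"
    using assms by arith
  then show ?thesis
    by (simp add: take_rev)
qed

lemma drop_rev_upt: "drop k (rev [l..<n]) = rev [l..<n - k]"
proof (cases "l + k \<le> n")
  case True
  then have "take (n - (l + k)) [l..<n] = [l..<n - k]"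
    by (simp add: take_upt)
  then show ?thesis
    by (simp add: drop_rev)
qed (simp add: drop_rev)

lemma pprod_plin_rev_upt_coeff:
  fixes a :: "nat \<Rightarrow> 'g::linordered_ab_group_add lay"
  assumes "\<forall>k\<in>{1..<m}. nu_less (a k) (a (Suc k))" "1 \<le> l" "l \<le> Suc m"
  shows "pprod (map (\<lambda>k. plin (Q k) (a k)) (rev [l..<Suc m])) n =
    (if n \<le> Suc m - l
     then lmul (lprod (map a (rev [l + n..<Suc m]))) (lone (prod_list (map Q (rev [l..<l + n]))))
     else LZero)"
proof -
  have "sorted_wrt (\<lambda>i j. nu_less (a j) (a i)) (rev [l..<Suc m])"
    unfolding sorted_wrt_rev
    by (rule sorted_wrt_mono_rel[OF _ sorted_wrt_upt]) (use nu_less_chain[OF assms(1)] assms(2) in auto)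
  then show ?thesis
    using assms(3) by (simp add: pprod_plin_coeff take_rev_upt drop_rev_upt del: upt_Suc)
qed

lemma prod_list_ratio_telescope:
  "prod_list (map (\<lambda>k. of_nat k / of_nat (k - 1)) (rev [2..<Suc (Suc n)])) = (of_nat (Suc n) :: rat)"
  by (induction n) (simp_all add: field_simps)

theorem proposition9p6:
  fixes a :: "nat \<Rightarrow> 'g::linordered_ab_group_add lay" and m :: nat
  assumes "1 \<le> m"
    and "\<forall>k\<in>{1..m}. lay_ok (a k)"
    and "\<forall>k\<in>{1..<m}. nu_less (a k) (a (Suc k))"
  shows "lderiv (pprod (map (\<lambda>k. plin 1 (a k)) (rev [1..<Suc m])))
         = pprod (map (\<lambda>k. plin (of_nat k / of_nat (k - 1)) (a k)) (rev [2..<Suc m]))"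
proof
  fix n
  note coeff = pprod_plin_rev_upt_coeff[OF assms(3)]
  show "lderiv (pprod (map (\<lambda>k. plin 1 (a k)) (rev [1..<Suc m]))) n
      = pprod (map (\<lambda>k. plin (of_nat k / of_nat (k - 1)) (a k)) (rev [2..<Suc m])) n"
    using assms(1)
    by (auto simp: lderiv_def coeff lay_scale_eq_lmul_lone map_replicate_const
          prod_list_ratio_telescope[unfolded One_nat_def] simp del: upt_Suc)
qed

end
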